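(* Under the standing assumptions, let $\vec v$ be a demand vector with at least four non-zero entries, and let $t$ be a task of type 2 with respect to $\vec v$ with intermediate task $i$. Then task $i$ is of type 1 with respect to $\vec v$.
   Context: Standing assumptions: $n\ge 4$, $k\ge 5$, and $f_1,\dots,f_n$ are functions from demand vectors to $[k]$ satisfying the demand (for every demand vector $\vec v$ and task $j$, exactly $v_j$ agents $a$ have $f_a(\vec v)=j$), with maximum switching cost at most $2$. A demand vector is $\vec v=(v_1,\dots,v_k)$ of non-negative integers with $\sum v_j=n$; task $j$ is non-empty in $\vec v$ if $v_j\ge1$. The switching cost of $(\vec v,\vec v')$ is the number of agents $a$ with $f_a(\vec v)\ne f_a(\vec v')$; $\vec v,\vec v'$ are adjacent if $\|\vec v-\vec v'\|_1=2$. An ordered pair $(\vec v_1,\vec v_2)$ is $(s,t)$-adjacent if $s\ne t$ and $\vec v_2$ is obtained from $\vec v_1$ by moving one unit of demand from task $s$ to task $t$. Agent $a$ is $(i,j)$-mobile with respect to $(\vec v_1,\vec v_2)$ if $f_a(\vec v_1)=i$, $f_a(\vec v_2)=j$, $i\ne j$. If $(\vec v_1,\vec v_2)$ is $(s,t)$-adjacent with switching cost $2$, then there is a task $i\notin\{s,t\}$ such that one switching agent is $(s,i)$-mobile and the other is $(i,t)$-mobile; $i$ is called the intermediate task of $(\vec v_1,\vec v_2)$. A task $t$ is of type 1 with respect to $\vec v$ if for every task $s\ne t$ non-empty in $\vec v$, the $(s,t)$-adjacent pair starting at $\vec v$ has switching cost $1$. A task $t$ is of type 2 with respect to $\vec v$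 if there exist a task $i$ and an agent $a$ such that for every task $s\notin\{i,t\}$ non-empty in $\vec v$, the $(s,t)$-adjacent pair starting at $\vec v$ has switching cost $2$, intermediate task $i$, and $(i,t)$-mobile agent $a$; then $i$ is the intermediate task of $t$ with respect to $\vec v$. *)

theory Defs
  imports Main
begin

(* Agents are 0..<n, tasks are 0..<k. A demand vector is v :: nat => nat with
   v j = 0 for j >= k and sum_{j<k} v j = n. Agent a's assignment is f a v. *)

definition demand_vec :: "nat \<Rightarrow> nat \<Rightarrow> (nat \<Rightarrow> nat) \<Rightarrow> bool" where
  "demand_vec n k v \<longleftrightarrow> (\<forall>j\<ge>k. v j = 0) \<and> (\<Sum>j<k. v j) = n"

definition satisfies_demand :: "nat \<Rightarrow> nat \<Rightarrow> (nat \<Rightarrow> (nat \<Rightarrow> nat) \<Rightarrow> nat) \<Rightarrow> bool" where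
  "satisfies_demand n k f \<longleftrightarrow> (\<forall>v. demand_vec n k v \<longrightarrow>
      (\<forall>a<n. f a v < k) \<and> (\<forall>j<k. card {a. a < n \<and> f a v = j} = v j))"

definition switching_cost :: "nat \<Rightarrow> (nat \<Rightarrow> (nat \<Rightarrow> nat) \<Rightarrow> nat) \<Rightarrow> (nat \<Rightarrow> nat) \<Rightarrow> (nat \<Rightarrow> nat) \<Rightarrow> nat" where
  "switching_cost n f v v' = card {a. a < n \<and> f a v \<noteq> f a v'}"

definition adjacent :: "nat \<Rightarrow> (nat \<Rightarrow> nat) \<Rightarrow> (nat \<Rightarrow> nat) \<Rightarrow> bool" where
  "adjacent k v v' \<longleftrightarrow> (\<Sum>j<k. \<bar>int (v j) - int (v' j)\<bar>) = 2"

definition max_switching_cost_le :: "nat \<Rightarrow> nat \<Rightarrow> (nat \<Rightarrow> (nat \<Rightarrow> nat) \<Rightarrow> nat) \<Rightarrow> nat \<Rightarrow> bool" where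
  "max_switching_cost_le n k f c \<longleftrightarrow> (\<forall>v v'. demand_vec n k v \<longrightarrow> demand_vec n k v' \<longrightarrow>
      adjacent k v v' \<longrightarrow> switching_cost n f v v' \<le> c)"

definition move :: "(nat \<Rightarrow> nat) \<Rightarrow> nat \<Rightarrow> nat \<Rightarrow> (nat \<Rightarrow> nat)" where
  "move v s t = (v(s := v s - 1)) (t := v t + 1)"

definition mobile :: "(nat \<Rightarrow> (nat \<Rightarrow> nat) \<Rightarrow> nat) \<Rightarrow> nat \<Rightarrow> nat \<Rightarrow> nat \<Rightarrow> (nat \<Rightarrow> nat) \<Rightarrow> (nat \<Rightarrow> nat) \<Rightarrow> bool" where
  "mobile f a i j v1 v2 \<longleftrightarrow> f a v1 = i \<and> f a v2 = j \<and> i \<noteq> j"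

definition has_intermediate :: "nat \<Rightarrow> (nat \<Rightarrow> (nat \<Rightarrow> nat) \<Rightarrow> nat) \<Rightarrow> (nat \<Rightarrow> nat) \<Rightarrow> nat \<Rightarrow> nat \<Rightarrow> nat \<Rightarrow> bool" where
  "has_intermediate n f v s t i \<longleftrightarrow>
     switching_cost n f v (move v s t) = 2 \<and> i \<noteq> s \<and> i \<noteq> t \<and>
     (\<exists>a<n. mobile f a s i v (move v s t)) \<and> (\<exists>b<n. mobile f b i t v (move v s t))"

definition type1 :: "nat \<Rightarrow> nat \<Rightarrow> (nat \<Rightarrow> (nat \<Rightarrow> nat) \<Rightarrow> nat) \<Rightarrow> (nat \<Rightarrow> nat) \<Rightarrow> nat \<Rightarrow> bool" where
  "type1 n k f v t \<longleftrightarrow> t < k \<and>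
     (\<forall>s<k. s \<noteq> t \<and> v s \<ge> 1 \<longrightarrow> switching_cost n f v (move v s t) = 1)"

definition type2 :: "nat \<Rightarrow> nat \<Rightarrow> (nat \<Rightarrow> (nat \<Rightarrow> nat) \<Rightarrow> nat) \<Rightarrow> (nat \<Rightarrow> nat) \<Rightarrow> nat \<Rightarrow> nat \<Rightarrow> bool" where
  "type2 n k f v t i \<longleftrightarrow> t < k \<and> i < k \<and>
     (\<exists>a<n. \<forall>s<k. s \<noteq> i \<and> s \<noteq> t \<and> v s \<ge> 1 \<longrightarrow>
        has_intermediate n f v s t i \<and> mobile f a i t v (move v s t))"

end

theory Submission
  imports Defs
begin

text \<open>Counting demand shows that the agents who switch across a move from \<open>s\<close> to \<open>t\<close> are either
  one agent going from \<open>s\<close> to \<open>t\<close>, or a chain of two agents \<open>s \<rightarrow> j \<rightarrow> t\<close>. Take a non-empty source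
  \<open>s \<notin> {i, t}\<close>. Type 2 gives the chain \<open>s \<rightarrow> i \<rightarrow> t\<close>; if the move from \<open>s\<close> to \<open>i\<close> also used a chain
  \<open>s \<rightarrow> j \<rightarrow> i\<close>, then three agents would switch across the subsequent move from \<open>i\<close> to \<open>t\<close>. So every
  such source reaches \<open>i\<close> through a single agent. If the move from \<open>t\<close> to \<open>i\<close> used a chain
  \<open>t \<rightarrow> j \<rightarrow> i\<close>, the same count across the move from \<open>s\<close> to \<open>i\<close> followed by the move from \<open>t\<close>
  to \<open>s\<close> forces \<open>j = s\<close> for every such source, and there are at least two of them.\<close>

definition switchers :: "nat \<Rightarrow> (nat \<Rightarrow> (nat \<Rightarrow> nat) \<Rightarrow> nat) \<Rightarrow> (nat \<Rightarrow> nat) \<Rightarrow> (nat \<Rightarrow> nat) \<Rightarrow> nat set" where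
  "switchers n f v v' = {a. a < n \<and> f a v \<noteq> f a v'}"

lemma mem_switchers [simp]: "a \<in> switchers n f v v' \<longleftrightarrow> a < n \<and> f a v \<noteq> f a v'"
  by (simp add: switchers_def)

lemma switching_cost_eq_card_switchers: "switching_cost n f v v' = card (switchers n f v v')"
  by (simp add: switching_cost_def switchers_def)

lemma finite_switchers [simp]: "finite (switchers n f v v')"
  by (simp add: switchers_def)

lemma move_apply: "move v s t j = (if j = t then v t + 1 else if j = s then v s - 1 else v j)"
  by (simp add: move_def)

lemma int_move:
  assumes "s \<noteq> t" "v s \<ge> 1"
  shows "int (move v s t j) = int (v j) + of_bool (j = t) - of_bool (j = s)"
  using assms by (auto simp: move_def)

lemma move_move_through:
  assumes "s \<noteq> j" "j \<noteq> t" "s \<noteq> t"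
  shows "move (move v s j) j t = move v s t"
  using assms by (auto simp: move_def fun_eq_iff)

lemma move_move_back:
  assumes "s \<noteq> j" "s \<noteq> t" "t \<noteq> j" "v s \<ge> 1"
  shows "move (move v s j) t s = move v t j"
  using assms by (auto simp: move_def fun_eq_iff)

lemma demand_vec_move:
  assumes "demand_vec n k v" "s < k" "t < k" "s \<noteq> t" "v s \<ge> 1"
  shows "demand_vec n k (move v s t)"
proof -
  have "int (\<Sum>j<k. move v s t j) = (\<Sum>j<k. int (v j) + of_bool (j = t) - of_bool (j = s))"
    using assms(4,5) by (simp add: int_move)
  also have "\<dots> = int (\<Sum>j<k. v j)"
    using assms(2,3) by (simp add: sum.distrib sum_subtractf)
  finally have "(\<Sum>j<k. move v s t j) = (\<Sum>j<k. v j)" by linarith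
  then show ?thesis using assms unfolding demand_vec_def by (simp add: move_apply)
qed

lemma adjacent_move:
  assumes "s < k" "t < k" "s \<noteq> t" "v s \<ge> 1"
  shows "adjacent k v (move v s t)"
proof -
  have "(\<Sum>j<k. \<bar>int (v j) - int (move v s t j)\<bar>) = (\<Sum>j<k. of_bool (j = t) + of_bool (j = s))"
    using assms by (intro sum.cong) (auto simp: int_move)
  also have "\<dots> = 2" using assms by (simp add: sum.distrib)
  finally show ?thesis unfolding adjacent_def .
qed

lemma card_assigned_eq_demand:
  assumes "satisfies_demand n k f" "demand_vec n k u"
  shows "card {a. a < n \<and> f a u = j} = u j"
proof (cases "j < k")
  case True
  then show ?thesis using assms unfolding satisfies_demand_def by blast
next
  case False
  have "\<forall>a<n. f a u < k" using assms unfolding satisfies_demand_def by blast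
  then have "{a. a < n \<and> f a u = j} = {}" using False by auto
  then show ?thesis using False assms(2) unfolding demand_vec_def by simp
qed

lemma card_assigned_diff_eq_sum_switchers:
  "int (card {a. a < n \<and> f a w = j}) - int (card {a. a < n \<and> f a v = j})
    = (\<Sum>a\<in>switchers n f v w. of_bool (f a w = j) - of_bool (f a v = j))"
proof -
  have card_eq_sum: "int (card {a. a < n \<and> f a u = j}) = (\<Sum>a<n. of_bool (f a u = j))" for u
    using sum.inter_filter[of "{..<n}" "\<lambda>_. 1::int" "\<lambda>a. f a u = j"]
    by (simp add: of_bool_def Collect_conj_eq lessThan_def Int_commute)
  have "(\<Sum>a<n. of_bool (f a w = j) - of_bool (f a v = j)) =
        (\<Sum>a\<in>switchers n f v w. of_bool (f a w = j) - (of_bool (f a v = j) :: int))"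
    by (rule sum.mono_neutral_right) (auto simp: switchers_def)
  then show ?thesis by (simp add: card_eq_sum sum_subtractf)
qed

lemma switchers_net_flow:
  assumes "satisfies_demand n k f" "demand_vec n k v"
    and "s < k" "t < k" "s \<noteq> t" "v s \<ge> 1"
  shows "(\<Sum>a\<in>switchers n f v (move v s t). of_bool (f a (move v s t) = j) - of_bool (f a v = j))
     = (of_bool (j = t) - of_bool (j = s) :: int)"
proof -
  have "demand_vec n k (move v s t)" using demand_vec_move assms(2-6) .
  then show ?thesis
    using card_assigned_diff_eq_sum_switchers[of n f "move v s t" j v] int_move[of s t v j, OF assms(5,6)]
      card_assigned_eq_demand[OF assms(1,2), of j] card_assigned_eq_demand[OF assms(1), of "move v s t" j]
    by simp
qed

lemma switching_cost_move_pos: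
  assumes "satisfies_demand n k f" "demand_vec n k v"
    and "s < k" "t < k" "s \<noteq> t" "v s \<ge> 1"
  shows "switching_cost n f v (move v s t) \<noteq> 0"
proof
  assume "switching_cost n f v (move v s t) = 0"
  then have "switchers n f v (move v s t) = {}" by (simp add: switching_cost_eq_card_switchers)
  then show False using switchers_net_flow[OF assms, of s] assms(5) by simp
qed

lemma switching_cost_one_switcher:
  assumes "satisfies_demand n k f" "demand_vec n k v"
    and "s < k" "t < k" "s \<noteq> t" "v s \<ge> 1"
    and "switching_cost n f v (move v s t) = 1"
  obtains y where "switchers n f v (move v s t) = {y}" "f y v = s" "f y (move v s t) = t"
proof -
  obtain y where y: "switchers n f v (move v s t) = {y}"
    using assms(7) by (auto simp: switching_cost_eq_card_switchers card_1_singleton_iff)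
  have "of_bool (f y (move v s t) = j) - of_bool (f y v = j) = (of_bool (j = t) - of_bool (j = s) :: int)" for j
    using switchers_net_flow[OF assms(1-6), of j] by (simp add: y)
  from this[of s] this[of t] assms(5) have "f y v = s" "f y (move v s t) = t"
    by (auto split: if_splits simp: of_bool_def)
  with y that show ?thesis by blast
qed

lemma two_switchers_chain:
  fixes F G :: "'a \<Rightarrow> 'b"
  assumes "F b \<noteq> G b" "F c \<noteq> G c" "s \<noteq> t"
    and flow: "\<And>j. (of_bool (G b = j) - of_bool (F b = j)) + (of_bool (G c = j) - of_bool (F c = j))
                 = (of_bool (j = t) - of_bool (j = s) :: int)"
  shows "\<exists>x y. {x, y} = {b, c} \<and> F x = s \<and> G x = F y \<and> G y = t \<and> F y \<noteq> s \<and> F y \<noteq> t"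
proof -
  have "(F b = s \<and> G b = F c \<and> G c = t \<and> F c \<noteq> s \<and> F c \<noteq> t) \<or>
        (F c = s \<and> G c = F b \<and> G b = t \<and> F b \<noteq> s \<and> F b \<noteq> t)"
    using flow[of s] flow[of t] flow[of "F b"] flow[of "F c"] flow[of "G b"] flow[of "G c"] assms(1-3)
    by (auto simp: of_bool_def split: if_splits)
  then show ?thesis by blast
qed

lemma switching_cost_two_has_intermediate:
  assumes "satisfies_demand n k f" "demand_vec n k v"
    and "s < k" "t < k" "s \<noteq> t" "v s \<ge> 1"
    and "switching_cost n f v (move v s t) = 2"
  shows "\<exists>j. has_intermediate n f v s t j"
proof -
  let ?w = "move v s t"
  obtain b c where bc: "switchers n f v ?w = {b, c}" "b \<noteq> c"
    using assms(7) by (auto simp: switching_cost_eq_card_switchers card_2_iff)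
  have "(of_bool (f b ?w = j) - of_bool (f b v = j)) + (of_bool (f c ?w = j) - of_bool (f c v = j))
          = (of_bool (j = t) - of_bool (j = s) :: int)" for j
    using switchers_net_flow[OF assms(1-6), of j] bc by simp
  moreover have "f b v \<noteq> f b ?w" "f c v \<noteq> f c ?w" "b < n" "c < n"
    using bc(1) by (metis insertI1 insertI2 mem_switchers)+
  ultimately obtain x y where "{x, y} = {b, c}" "f x v = s" "f x ?w = f y v" "f y ?w = t"
      "f y v \<noteq> s" "f y v \<noteq> t"
    using two_switchers_chain[of "\<lambda>a. f a v" b "\<lambda>a. f a ?w" c s t] assms(5) by blast
  with bc \<open>b < n\<close> \<open>c < n\<close> assms(7) have "has_intermediate n f v s t (f y v)"
    unfolding has_intermediate_def mobile_def by (metis doubleton_eq_iff)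
  then show ?thesis ..
qed

lemma switching_cost_move_cases:
  assumes "satisfies_demand n k f" "max_switching_cost_le n k f 2" "demand_vec n k v"
    and "s < k" "t < k" "s \<noteq> t" "v s \<ge> 1"
  shows "switching_cost n f v (move v s t) = 1 \<or> (\<exists>j. has_intermediate n f v s t j)"
proof -
  have "switching_cost n f v (move v s t) \<le> 2"
    using assms(2) demand_vec_move[OF assms(3-7)] adjacent_move[of s k t v, OF assms(4-7)] assms(3)
    unfolding max_switching_cost_le_def by blast
  moreover have "switching_cost n f v (move v s t) \<noteq> 0"
    using switching_cost_move_pos[OF assms(1,3-7)] .
  ultimately consider "switching_cost n f v (move v s t) = 1" | "switching_cost n f v (move v s t) = 2"
    by linarith
  then show ?thesis using switching_cost_two_has_intermediate[OF assms(1,3-7)] by cases auto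
qed

lemma has_intermediate_switchers:
  assumes "has_intermediate n f v s t j"
  obtains b c where "switchers n f v (move v s t) = {b, c}"
    "f b v = s" "f b (move v s t) = j" "f c v = j" "f c (move v s t) = t"
proof -
  obtain b c where b: "b < n" "f b v = s" "f b (move v s t) = j"
    and c: "c < n" "f c v = j" "f c (move v s t) = t"
    and cost: "card (switchers n f v (move v s t)) = 2" and "j \<noteq> s" "j \<noteq> t"
    using assms unfolding has_intermediate_def mobile_def switching_cost_eq_card_switchers by blast
  then have "{b, c} \<subseteq> switchers n f v (move v s t)" "card {b, c} = 2" by (auto simp: card_2_iff)
  with cost have "switchers n f v (move v s t) = {b, c}"
    by (metis card_subset_eq finite_switchers)
  with b c that show ?thesis by blast
qed

lemma three_switchers_absurd:
  assumes "max_switching_cost_le n k f 2" "demand_vec n k u" "demand_vec n k u'" "adjacent k u u'"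
    and "distinct [x, y, z]" "{x, y, z} \<subseteq> switchers n f u u'"
  shows False
proof -
  have "3 \<le> card (switchers n f u u')"
    using card_mono[OF finite_switchers assms(6)] assms(5) by simp
  then show False
    using assms(1-4) unfolding max_switching_cost_le_def switching_cost_eq_card_switchers by fastforce
qed

lemma move_to_intermediate_cost_one:
  assumes sd: "satisfies_demand n k f" and mx: "max_switching_cost_le n k f 2"
    and dv: "demand_vec n k v"
    and "s < k" "t < k" "i < k" "s \<noteq> t" "v s \<ge> 1"
    and hi: "has_intermediate n f v s t i"
  shows "switching_cost n f v (move v s i) = 1"
proof (rule ccontr)
  let ?w = "move v s i" and ?C = "move v s t"
  have "i \<noteq> s" "i \<noteq> t" using hi unfolding has_intermediate_def by auto
  assume "switching_cost n f v ?w \<noteq> 1"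
  then obtain j where hj: "has_intermediate n f v s i j"
    using switching_cost_move_cases[OF sd mx dv \<open>s < k\<close> \<open>i < k\<close>] \<open>i \<noteq> s\<close> assms(8) by auto
  then have "j \<noteq> s" "j \<noteq> i" unfolding has_intermediate_def by auto
  obtain b c where bc: "switchers n f v ?w = {b, c}"
    "f b v = s" "f b ?w = j" "f c v = j" "f c ?w = i"
    using has_intermediate_switchers[OF hj] .
  obtain x a where xa: "switchers n f v ?C = {x, a}"
    "f x v = s" "f x ?C = i" "f a v = i" "f a ?C = t"
    using has_intermediate_switchers[OF hi] .
  have "b < n" "c < n" "a < n" using bc(1) xa(1) by (metis insertI1 insertI2 mem_switchers)+
  have "f a ?w = i" "f c ?C = j" "f b ?C \<noteq> j"
    using bc xa \<open>a < n\<close> \<open>c < n\<close> \<open>b < n\<close> \<open>j \<noteq> s\<close> \<open>j \<noteq> i\<close> \<open>i \<noteq> s\<close>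
    by (metis insert_iff mem_switchers singletonD)+
  \<comment> \<open>\<open>?C\<close> is \<open>?w\<close> followed by the move from \<open>i\<close> to \<open>t\<close>, across which \<open>a\<close>, \<open>b\<close>, \<open>c\<close> all switch.\<close>
  then have "{a, c, b} \<subseteq> switchers n f ?w ?C"
    using bc xa \<open>a < n\<close> \<open>b < n\<close> \<open>c < n\<close> \<open>i \<noteq> t\<close> \<open>j \<noteq> i\<close> by auto
  moreover have "distinct [a, c, b]" using bc xa \<open>j \<noteq> s\<close> \<open>j \<noteq> i\<close> \<open>i \<noteq> s\<close> by auto
  moreover have "?C = move ?w i t" using move_move_through \<open>i \<noteq> s\<close> \<open>i \<noteq> t\<close> assms(7) by metis
  moreover have dw: "demand_vec n k ?w" using demand_vec_move[OF dv assms(4,6) \<open>i \<noteq> s\<close>[symmetric] assms(8)] .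
  moreover have "?w i \<ge> 1" by (simp add: move_def)
  ultimately show False
    using three_switchers_absurd[OF mx dw demand_vec_move[OF dw] adjacent_move] assms(5,6) \<open>i \<noteq> t\<close> by metis
qed

lemma has_intermediate_eq_cost_one_source:
  assumes sd: "satisfies_demand n k f" and mx: "max_switching_cost_le n k f 2"
    and dv: "demand_vec n k v"
    and "s < k" "t < k" "i < k" "s \<noteq> i" "s \<noteq> t" "t \<noteq> i" "v s \<ge> 1" "v t \<ge> 1"
    and cost_one: "switching_cost n f v (move v s i) = 1"
    and hj: "has_intermediate n f v t i j"
  shows "j = s"
proof (rule ccontr)
  let ?P = "move v s i" and ?w = "move v t i"
  assume "j \<noteq> s"
  have "j \<noteq> t" "j \<noteq> i" using hj unfolding has_intermediate_def by auto
  obtain y where y: "switchers n f v ?P = {y}" "f y v = s" "f y ?P = i"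
    using switching_cost_one_switcher[OF sd dv assms(4,6,7,10) cost_one] .
  obtain b c where bc: "switchers n f v ?w = {b, c}"
    "f b v = t" "f b ?w = j" "f c v = j" "f c ?w = i"
    using has_intermediate_switchers[OF hj] .
  have "b < n" "c < n" "y < n" using bc(1) y(1) by (metis insertI1 insertI2 mem_switchers)+
  have "f y ?w = s" "f b ?P = t" "f c ?P = j"
    using bc y \<open>b < n\<close> \<open>c < n\<close> \<open>y < n\<close> \<open>j \<noteq> s\<close> \<open>j \<noteq> t\<close> assms(8)
    by (metis insert_iff mem_switchers singletonD)+
  \<comment> \<open>\<open>?w\<close> is \<open>?P\<close> followed by the move from \<open>t\<close> to \<open>s\<close>, across which \<open>y\<close>, \<open>b\<close>, \<open>c\<close> all switch.\<close>
  then have "{y, b, c} \<subseteq> switchers n f ?P ?w"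
    using bc y \<open>b < n\<close> \<open>c < n\<close> \<open>y < n\<close> \<open>j \<noteq> s\<close> \<open>j \<noteq> t\<close> \<open>j \<noteq> i\<close> assms(7) by auto
  moreover have "distinct [y, b, c]" using bc y \<open>j \<noteq> s\<close> \<open>j \<noteq> t\<close> assms(8) by auto
  moreover have "?w = move ?P t s" using move_move_back assms(7-10) by metis
  moreover have dP: "demand_vec n k ?P" using demand_vec_move[OF dv assms(4,6,7,10)] .
  moreover have "?P t \<ge> 1" using assms(8,9,11) by (simp add: move_def)
  ultimately show False
    using three_switchers_absurd[OF mx dP demand_vec_move[OF dP] adjacent_move] assms(4,5,8) by metis
qed

lemma two_elements_outside_pair:
  assumes "4 \<le> card A"
  obtains x y where "x \<in> A - {i, j}" "y \<in> A - {i, j}" "x \<noteq> y"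
proof -
  have "card A - card {i, j} \<le> card (A - {i, j})"
    by (rule diff_card_le_card_Diff) simp
  moreover have "card {i, j} \<le> 2" by (simp add: card_insert_if)
  ultimately have "2 \<le> card (A - {i, j})" using assms by linarith
  then obtain S where "S \<subseteq> A - {i, j}" "card S = 2"
    by (meson obtain_subset_with_card_n)
  then show ?thesis using that by (auto simp: card_2_iff)
qed

theorem lemma4p4:
  fixes n k :: nat and f :: "nat \<Rightarrow> (nat \<Rightarrow> nat) \<Rightarrow> nat"
    and v :: "nat \<Rightarrow> nat" and t i :: nat
  assumes "n \<ge> 4" and "k \<ge> 5"
    and "satisfies_demand n k f"
    and "max_switching_cost_le n k f 2"
    and "demand_vec n k v"
    and "card {j. j < k \<and> v j \<noteq> 0} \<ge> 4"
    and "type2 n k f v t i"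
  shows "type1 n k f v i"
proof -
  note sd = assms(3) and mx = assms(4) and dv = assms(5)
  have "t < k" "i < k" and hi: "\<And>s. s < k \<Longrightarrow> s \<noteq> i \<Longrightarrow> s \<noteq> t \<Longrightarrow> v s \<ge> 1 \<Longrightarrow>
      has_intermediate n f v s t i"
    using assms(7) unfolding type2_def by blast+
  obtain s1 s2 where s12: "s1 \<in> {j. j < k \<and> v j \<noteq> 0} - {i, t}" "s2 \<in> {j. j < k \<and> v j \<noteq> 0} - {i, t}"
    and "s1 \<noteq> s2"
    using two_elements_outside_pair[OF assms(6)] .
  have "t \<noteq> i" using hi[of s1] s12(1) unfolding has_intermediate_def by auto
  have cost_one: "switching_cost n f v (move v s i) = 1" if "s < k" "s \<noteq> i" "s \<noteq> t" "v s \<ge> 1" for s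
    using move_to_intermediate_cost_one[OF sd mx dv that(1) \<open>t < k\<close> \<open>i < k\<close> that(3,4) hi[OF that]] .
  moreover have "switching_cost n f v (move v t i) = 1" if vt: "v t \<ge> 1"
  proof (rule ccontr)
    assume "switching_cost n f v (move v t i) \<noteq> 1"
    then obtain j where "has_intermediate n f v t i j"
      using switching_cost_move_cases[OF sd mx dv \<open>t < k\<close> \<open>i < k\<close> \<open>t \<noteq> i\<close> vt] by blast
    then have "j = s" if "s \<in> {j. j < k \<and> v j \<noteq> 0} - {i, t}" for s
      using has_intermediate_eq_cost_one_source[OF sd mx dv _ \<open>t < k\<close> \<open>i < k\<close> _ _ \<open>t \<noteq> i\<close> _ vt]
        cost_one that by simp
    with s12 \<open>s1 \<noteq> s2\<close> show False by metis
  qed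
  ultimately show ?thesis using \<open>i < k\<close> unfolding type1_def by auto
qed

end
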